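(* Consider the covariate-adaptive randomization design described in the context with $I=2$ covariates, each having 2 levels (so $2\times 2=4$ strata). Let the weights $w_{o}, w_{m,1}, w_{m,2}, w_{s}$ be nonnegative with $w_{o}+w_{m,1}+w_{m,2}+w_{s}=1$. Suppose the following two conditions hold: (A) $w_{s}>0$; (B) define $u_{1}=w_{o}+w_{m,1}+w_{m,2}+w_{s}=1$, $u_{2}=w_{o}+w_{m,1}$, $u_{3}=w_{o}+w_{m,2}$, $u_{4}=w_{o}$; the solution $\mathbf{x}=(x_{1},x_{2},x_{3})$ of the linear system \[ \begin{pmatrix} u_{1} & u_{2} & u_{3}\\ u_{2} & u_{1} & u_{4}\\ u_{3} & u_{4} & u_{1}\end{pmatrix} \begin{pmatrix} x_{1}\\ x_{2}\\ x_{3}\end{pmatrix} =\begin{pmatrix} u_{4}\\ u_{3}\\ u_{2}\end{pmatrix} \] satisfies $|x_{1}|+|x_{2}|+|x_{3}|<1$. Then $(\mathbf{D}_{n})_{n\geq1}$ is a positive recurrent Markov chain with period 2 on $\mathbb{Z}^{4}$.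
   Context: Two treatments (1 and 2) are compared; patients arrive sequentially. There are $I$ covariates, covariate $i$ having $m_i$ levels; a stratum is a covariate profile $(k_1,\ldots,k_I)$ and a margin $(i;k_i)$ is the set of patients whose $i$th covariate is at level $k_i$. The covariate profiles $Z_1,Z_2,\ldots$ are i.i.d. multinomial over the strata. After $n-1$ patients, $D_{n-1}$, $D_{n-1}(i;k_i)$ and $D_{n-1}(k_1,\ldots,k_I)$ denote (number in treatment 1) minus (number in treatment 2) overall, on margin $(i;k_i)$, and within stratum $(k_1,\ldots,k_I)$. If the $n$th patient falls in stratum $(k_1^*,\ldots,k_I^* )$, let $\mathit{Imb}_n^{(1)}=w_o[D_{n-1}+1]^2+\sum_{i=1}^I w_{m,i}[D_{n-1}(i;k_i^* )+1]^2+w_s[D_{n-1}(k_1^*,\ldots,k_I^* )+1]^2$ be the weighted imbalance if the patient is assigned to treatment 1, and $\mathit{Imb}_n^{(2)}$ the analogous quantity with $-1$ in place of $+1$. The first patient is assigned to treatment 1 with probability $1/2$; for $n>1$, the $n$th patient is assigned to treatment 1 with probability $q$ if $\mathit{Imb}_n^{(1)}>\mathit{Imb}_n^{(2)}$, $p$ if $\mathit{Imb}_n^{(1)}<\mathit{Imb}_n^{(2)}$, and $1/2$ otherwise, where $0<q<p<1$, $p+q=1$. $\mathbf{D}_n=[D_n(k_1,\ldots,k_I)]$ is the array of within-stratum differences after $n$ patients; $(\mathbf{D}_n)_{n\ge1}$ is a Markov chain on $\mathbb{Z}^m$, $m=\prod_i m_i$. *)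

theory Defs
  imports "HOL-Probability.Probability"
begin

primrec mc_steps :: "('a \<Rightarrow> 'a pmf) \<Rightarrow> nat \<Rightarrow> 'a \<Rightarrow> 'a pmf" where
  "mc_steps K 0 x = return_pmf x"
| "mc_steps K (Suc n) x = bind_pmf (mc_steps K n x) K"

definition n_step :: "('a \<Rightarrow> 'a pmf) \<Rightarrow> nat \<Rightarrow> 'a \<Rightarrow> 'a \<Rightarrow> real" where
  "n_step K n x y = pmf (mc_steps K n x) y"

definition accessible :: "('a \<Rightarrow> 'a pmf) \<Rightarrow> 'a \<Rightarrow> 'a \<Rightarrow> bool" where
  "accessible K x y \<longleftrightarrow> (\<exists>n. n_step K n x y > 0)"

text \<open>Chain started at x, absorbed in None at the first return (at time \<ge> 1) to x.\<close>
primrec return_steps :: "('a \<Rightarrow> 'a pmf) \<Rightarrow> 'a \<Rightarrow> nat \<Rightarrow> 'a option pmf" where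
  "return_steps K x 0 = return_pmf (Some x)"
| "return_steps K x (Suc n) = bind_pmf (return_steps K x n)
     (\<lambda>st. case st of None \<Rightarrow> return_pmf None
                  | Some d \<Rightarrow> map_pmf (\<lambda>d'. if d' = x then None else Some d') (K d))"

text \<open>P_x(T_x \<le> n), where T_x = min {n \<ge> 1. X_n = x}.\<close>
definition return_by :: "('a \<Rightarrow> 'a pmf) \<Rightarrow> 'a \<Rightarrow> nat \<Rightarrow> real" where
  "return_by K x n = pmf (return_steps K x n) None"

definition first_return_prob :: "('a \<Rightarrow> 'a pmf) \<Rightarrow> 'a \<Rightarrow> nat \<Rightarrow> real" where
  "first_return_prob K x n = (if n = 0 then 0 else return_by K x n - return_by K x (n - 1))"

definition positive_recurrent :: "('a \<Rightarrow> 'a pmf) \<Rightarrow> 'a \<Rightarrow> bool" where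
  "positive_recurrent K x \<longleftrightarrow>
     summable (first_return_prob K x) \<and> (\<Sum>n. first_return_prob K x n) = 1 \<and>
     summable (\<lambda>n. real n * first_return_prob K x n)"

definition period :: "('a \<Rightarrow> 'a pmf) \<Rightarrow> 'a \<Rightarrow> nat" where
  "period K x = Gcd {n. 0 < n \<and> 0 < n_step K n x x}"

text \<open>A stratum (k1,k2): level of covariate 1 is fst, of covariate 2 is snd.
  A state is the array of within-stratum differences D(k1,k2).\<close>
type_synonym stratum = "bool \<times> bool"
type_synonym cstate = "stratum \<Rightarrow> int"

definition imb :: "real \<Rightarrow> real \<Rightarrow> real \<Rightarrow> real \<Rightarrow> cstate \<Rightarrow> stratum \<Rightarrow> int \<Rightarrow> real" where
  "imb wo wm1 wm2 ws d s e =
     wo * (of_int ((\<Sum>t\<in>UNIV. d t) + e))\<^sup>2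
   + wm1 * (of_int ((\<Sum>t\<in>{t. fst t = fst s}. d t) + e))\<^sup>2
   + wm2 * (of_int ((\<Sum>t\<in>{t. snd t = snd s}. d t) + e))\<^sup>2
   + ws * (of_int (d s + e))\<^sup>2"

definition assign_prob :: "real \<Rightarrow> real \<Rightarrow> real \<Rightarrow> real \<Rightarrow> real \<Rightarrow> real \<Rightarrow> cstate \<Rightarrow> stratum \<Rightarrow> real" where
  "assign_prob wo wm1 wm2 ws p q d s =
     (if imb wo wm1 wm2 ws d s 1 > imb wo wm1 wm2 ws d s (-1) then q
      else if imb wo wm1 wm2 ws d s 1 < imb wo wm1 wm2 ws d s (-1) then p
      else 1/2)"

text \<open>Transition kernel of (D_n): the new patient's stratum is drawn from Z,
  then assigned to treatment 1 (+1) or 2 (-1).\<close>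
definition car_kernel :: "real \<Rightarrow> real \<Rightarrow> real \<Rightarrow> real \<Rightarrow> real \<Rightarrow> real \<Rightarrow> stratum pmf \<Rightarrow> cstate \<Rightarrow> cstate pmf" where
  "car_kernel wo wm1 wm2 ws p q Z d =
     bind_pmf Z (\<lambda>s. map_pmf (\<lambda>b. d(s := d s + (if b then 1 else -1)))
                              (bernoulli_pmf (assign_prob wo wm1 wm2 ws p q d s)))"

definition chain_states :: "(cstate \<Rightarrow> cstate pmf) \<Rightarrow> cstate set" where
  "chain_states K = {y. \<exists>n\<ge>1. n_step K n (\<lambda>_. 0) y > 0}"

end

theory Submission
  imports Defs
begin

text \<open>
  The weighted imbalance energy \<open>V(D)\<close>, i.e. the weighted sum of the squared overall, marginal
  and within-stratum imbalances, changes by \<open>\<plusminus>2 L(D,s) + 1\<close> when the new patient of stratum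
  \<open>s\<close> is assigned to treatment 1 or 2, where \<open>4 L(D,s) = Imb\<^sup>1 - Imb\<^sup>2\<close>. The biased coin
  favours the sign that lowers \<open>V\<close>, so \<open>E[\<Delta>V] = 1 - 2(p - q) E|L(D,s)|\<close>. Because \<open>ws > 0\<close> the
  energy is positive definite, \<open>\<Sum>\<^sub>s |L(D,s)|\<close> grows linearly in \<open>|D|\<^sub>1\<close>, and \<open>V\<close> drifts down by
  at least 1 outside a bounded set. Adding a multiple of \<open>1 - \<gamma>\<^bsup>|D - x|\<^sub>1\<^esup>\<close>, which decreases
  in expectation because the chain steps towards \<open>x\<close> with probability at least \<open>2\<gamma>\<close>, yields a
  Foster function for the return to an arbitrary state \<open>x\<close>. Every state is reachable since each
  coordinate moves by \<open>\<plusminus>1\<close>, and the period is 2 since each step changes \<open>\<Sum>D\<close> by \<open>\<plusminus>1\<close>.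
\<close>

section \<open>Reachability and periodicity\<close>

lemma n_step_pos_iff: "0 < n_step K n x y \<longleftrightarrow> y \<in> set_pmf (mc_steps K n x)"
  by (simp add: n_step_def pmf_positive_iff)

lemma accessible_by_descent:
  fixes \<rho> :: "'a \<Rightarrow> nat"
  assumes zero: "\<And>y. \<rho> y = 0 \<Longrightarrow> y = x"
    and descent: "\<And>y. 0 < \<rho> y \<Longrightarrow> \<exists>y'. \<rho> y' < \<rho> y \<and> y \<in> set_pmf (K y')"
  shows "accessible K x y"
proof -
  have "\<exists>n. y \<in> set_pmf (mc_steps K n x)"
  proof (induction "\<rho> y" arbitrary: y rule: less_induct)
    case less
    show ?case
    proof (cases "\<rho> y = 0")
      case True
      then show ?thesis using zero by (intro exI[of _ 0]) simp
    next
      case False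
      then obtain y' where y': "\<rho> y' < \<rho> y" "y \<in> set_pmf (K y')" using descent by blast
      with less obtain n where "y' \<in> set_pmf (mc_steps K n x)" by blast
      with y' have "y \<in> set_pmf (mc_steps K (Suc n) x)" by auto
      then show ?thesis ..
    qed
  qed
  then show ?thesis by (simp add: accessible_def n_step_pos_iff)
qed

lemma mc_steps_parity:
  fixes \<sigma> :: "'a \<Rightarrow> int"
  assumes odd_step: "\<And>y z. z \<in> set_pmf (K y) \<Longrightarrow> odd (\<sigma> z - \<sigma> y)"
  shows "y \<in> set_pmf (mc_steps K n x) \<Longrightarrow> even (\<sigma> y - \<sigma> x - int n)"
proof (induction n arbitrary: y)
  case 0
  then show ?case by simp
next
  case (Suc n)
  then obtain z where z: "z \<in> set_pmf (mc_steps K n x)" "y \<in> set_pmf (K z)" by auto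
  have "\<sigma> y - \<sigma> x - int (Suc n) = (\<sigma> z - \<sigma> x - int n) + (\<sigma> y - \<sigma> z - 1)" by simp
  moreover have "even (\<sigma> z - \<sigma> x - int n)" using Suc.IH z(1) .
  moreover have "even (\<sigma> y - \<sigma> z - 1)" using odd_step[OF z(2)] by simp
  ultimately show ?case by presburger
qed

lemma period_eq_2I:
  assumes "0 < n_step K 2 x x" and "\<And>n. 0 < n_step K n x x \<Longrightarrow> even n"
  shows "period K x = 2"
proof -
  let ?A = "{n. 0 < n \<and> 0 < n_step K n x x}"
  have "Gcd ?A dvd 2" using assms(1) by (intro Gcd_dvd) auto
  moreover have "2 dvd Gcd ?A" using assms(2) by (intro Gcd_greatest) auto
  ultimately show ?thesis unfolding period_def by (rule dvd_antisym)
qed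

section \<open>Return times and Foster's criterion\<close>

lemma return_by_0 [simp]: "return_by K x 0 = 0"
  by (simp add: return_by_def)

lemma return_by_le_1: "return_by K x n \<le> 1"
  by (simp add: return_by_def pmf_le_1)

lemma return_by_mono: "return_by K x n \<le> return_by K x (Suc n)"
proof -
  have "ennreal (return_by K x n) = (\<integral>\<^sup>+ st. indicator {None} st \<partial>return_steps K x n)"
    by (simp add: return_by_def emeasure_pmf_single)
  also have "\<dots> \<le> (\<integral>\<^sup>+ st. ennreal (pmf (case st of None \<Rightarrow> return_pmf None
                  | Some d \<Rightarrow> map_pmf (\<lambda>d'. if d' = x then None else Some d') (K d)) None) \<partial>return_steps K x n)"
    by (intro nn_integral_mono) (auto split: option.splits split_indicator)
  also have "\<dots> = ennreal (return_by K x (Suc n))"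
    by (simp add: return_by_def ennreal_pmf_bind)
  finally show ?thesis by (simp add: return_by_def)
qed

lemma first_return_prob_nonneg: "0 \<le> first_return_prob K x n"
  using return_by_mono[of K x "n - 1"] by (cases n) (auto simp: first_return_prob_def)

text \<open>The mean return time is the sum of the tail probabilities \<open>P(T > n)\<close>.\<close>
lemma positive_recurrent_if_summable_tail:
  assumes "summable (\<lambda>n. 1 - return_by K x n)"
  shows "positive_recurrent K x"
proof -
  define b where "b = (\<lambda>n. 1 - return_by K x n)"
  have b_nonneg: "0 \<le> b n" for n
    using return_by_le_1 by (simp add: b_def)
  have b_summable: "summable b"
    using assms by (simp add: b_def)
  have first_return_Suc: "first_return_prob K x (Suc n) = b n - b (Suc n)" for n
    by (simp add: first_return_prob_def b_def)
  have "(\<lambda>n. b n - b (Suc n)) sums (b 0 - 0)"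
    by (rule telescope_sums'[OF summable_LIMSEQ_zero[OF b_summable]])
  then have "(\<lambda>n. first_return_prob K x (Suc n)) sums 1"
    by (simp add: first_return_Suc b_def)
  then have sums_1: "first_return_prob K x sums 1"
    using sums_Suc_iff[of "first_return_prob K x" 1] by (simp add: first_return_prob_def)
  have mean_partial: "(\<Sum>n<Suc N. real n * first_return_prob K x n) = (\<Sum>k<N. b k) - real N * b N" for N
  proof (induction N)
    case 0
    then show ?case by (simp add: first_return_prob_def)
  next
    case (Suc N)
    then show ?case by (simp add: first_return_Suc algebra_simps)
  qed
  have "(\<Sum>n<N. real n * first_return_prob K x n) \<le> suminf b" for N
  proof (cases N)
    case 0
    then show ?thesis using suminf_nonneg[OF b_summable b_nonneg] by simp
  next
    case (Suc M)
    then have "(\<Sum>n<N. real n * first_return_prob K x n) \<le> (\<Sum>k<M. b k)"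
      using mean_partial[of M] b_nonneg[of M] by simp
    also have "\<dots> \<le> suminf b"
      using sum_le_suminf[OF b_summable] b_nonneg by auto
    finally show ?thesis .
  qed
  then have "summable (\<lambda>n. real n * first_return_prob K x n)"
    by (intro summableI_nonneg_bounded) (simp_all add: first_return_prob_nonneg)
  then show ?thesis
    using sums_1 by (auto simp: positive_recurrent_def sums_iff)
qed

definition killed_expectation :: "('a \<Rightarrow> 'a pmf) \<Rightarrow> 'a \<Rightarrow> ('a \<Rightarrow> real) \<Rightarrow> nat \<Rightarrow> ennreal" where
  "killed_expectation K x W n =
     (\<integral>\<^sup>+ w. (case w of None \<Rightarrow> 0 | Some d \<Rightarrow> ennreal (W d)) \<partial>return_steps K x n)"

lemma killed_expectation_one: "killed_expectation K x (\<lambda>_. 1) n = ennreal (1 - return_by K x n)"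
proof -
  have "killed_expectation K x (\<lambda>_. 1) n = (\<integral>\<^sup>+ w. 1 - indicator {None} w \<partial>return_steps K x n)"
    unfolding killed_expectation_def by (intro nn_integral_cong) (auto split: option.splits)
  also have "\<dots> = 1 - (\<integral>\<^sup>+ w. indicator {None} w \<partial>return_steps K x n)"
    by (subst nn_integral_diff) (auto split: split_indicator)
  also have "\<dots> = ennreal (1 - return_by K x n)"
    by (simp add: return_by_def emeasure_pmf_single ennreal_minus flip: ennreal_1)
  finally show ?thesis .
qed

lemma killed_expectation_at_1:
  "killed_expectation K x W 1 = (\<integral>\<^sup>+ y. ennreal (W y) \<partial>K x)" if "W x = 0"
  unfolding killed_expectation_def using that by (simp, intro nn_integral_cong) simp

lemma killed_expectation_drift:
  fixes K :: "'a \<Rightarrow> 'a pmf"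
  assumes Wx: "W x = 0"
    and drift: "\<And>d. d \<noteq> x \<Longrightarrow> (\<integral>\<^sup>+ y. ennreal (W y) \<partial>K d) + 1 \<le> ennreal (W d)"
    and "1 \<le> n"
  shows "killed_expectation K x W (Suc n) + killed_expectation K x (\<lambda>_. 1) n
           \<le> killed_expectation K x W n"
proof -
  let ?E = "\<lambda>st. case st of None \<Rightarrow> 0 | Some d \<Rightarrow> \<integral>\<^sup>+ y. ennreal (W y) \<partial>K d"
  let ?one = "\<lambda>st. case st of None \<Rightarrow> 0 | Some d \<Rightarrow> ennreal 1"
  have x_killed: "Some x \<notin> set_pmf (return_steps K x n)"
    using \<open>1 \<le> n\<close> by (cases n) (auto split: option.splits)
  have "killed_expectation K x W (Suc n) = (\<integral>\<^sup>+ st. ?E st \<partial>return_steps K x n)"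
    unfolding killed_expectation_def
    by (simp, intro nn_integral_cong) (auto simp: Wx split: option.splits intro!: nn_integral_cong)
  then have "killed_expectation K x W (Suc n) + killed_expectation K x (\<lambda>_. 1) n
      = (\<integral>\<^sup>+ st. ?E st + ?one st \<partial>return_steps K x n)"
    unfolding killed_expectation_def by (simp add: nn_integral_add)
  also have "\<dots> \<le> killed_expectation K x W n"
    unfolding killed_expectation_def
  proof (intro nn_integral_mono_AE, unfold AE_measure_pmf_iff, intro ballI)
    fix st assume "st \<in> set_pmf (return_steps K x n)"
    with x_killed have "st \<noteq> Some x" by auto
    then show "?E st + ?one st \<le> (case st of None \<Rightarrow> 0 | Some d \<Rightarrow> ennreal (W d))"
      using drift by (auto split: option.splits)
  qed
  finally show ?thesis .
qed

lemma return_tail_sum_le_drift: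
  fixes K :: "'a \<Rightarrow> 'a pmf"
  assumes Wx: "W x = 0"
    and drift: "\<And>d. d \<noteq> x \<Longrightarrow> (\<integral>\<^sup>+ y. ennreal (W y) \<partial>K d) + 1 \<le> ennreal (W d)"
  shows "(\<Sum>n\<in>{1..N}. ennreal (1 - return_by K x n)) \<le> (\<integral>\<^sup>+ y. ennreal (W y) \<partial>K x)"
proof -
  have "killed_expectation K x W (Suc N) + (\<Sum>n\<in>{1..N}. ennreal (1 - return_by K x n))
          \<le> killed_expectation K x W 1"
  proof (induction N)
    case (Suc N)
    have "killed_expectation K x W (Suc (Suc N)) + (\<Sum>n\<in>{1..Suc N}. ennreal (1 - return_by K x n))
        = (killed_expectation K x W (Suc (Suc N)) + killed_expectation K x (\<lambda>_. 1) (Suc N))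
          + (\<Sum>n\<in>{1..N}. ennreal (1 - return_by K x n))"
      by (simp add: killed_expectation_one add_ac)
    also have "\<dots> \<le> killed_expectation K x W (Suc N) + (\<Sum>n\<in>{1..N}. ennreal (1 - return_by K x n))"
      using killed_expectation_drift[OF Wx drift, of "Suc N"] by (intro add_right_mono) auto
    finally show ?case using Suc.IH by (rule order_trans)
  qed simp
  also have "killed_expectation K x W 1 = (\<integral>\<^sup>+ y. ennreal (W y) \<partial>K x)"
    using Wx by (rule killed_expectation_at_1)
  finally show ?thesis
    by (rule order_trans[rotated]) simp
qed

lemma positive_recurrent_if_drift:
  fixes K :: "'a \<Rightarrow> 'a pmf"
  assumes Wx: "W x = 0"
    and drift: "\<And>d. d \<noteq> x \<Longrightarrow> (\<integral>\<^sup>+ y. ennreal (W y) \<partial>K d) + 1 \<le> ennreal (W d)"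
    and finite: "(\<integral>\<^sup>+ y. ennreal (W y) \<partial>K x) < \<infinity>"
  shows "positive_recurrent K x"
proof -
  define b where "b = (\<lambda>n. 1 - return_by K x n)"
  define B where "B = enn2real (\<integral>\<^sup>+ y. ennreal (W y) \<partial>K x)"
  have b_nonneg: "0 \<le> b n" for n
    using return_by_le_1 by (simp add: b_def)
  have "ennreal (\<Sum>n\<in>{1..N}. b n) \<le> ennreal B" for N
    using return_tail_sum_le_drift[OF Wx drift, of N] finite b_nonneg
    by (simp add: b_def B_def sum_ennreal less_top ennreal_enn2real_if)
  then have b_partial: "(\<Sum>n\<in>{1..N}. b n) \<le> B" for N
    by (simp add: B_def ennreal_le_iff)
  have "(\<Sum>n<N. b n) \<le> 1 + B" for N
  proof -
    have "(\<Sum>n<N. b n) \<le> (\<Sum>n<Suc N. b n)"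
      using b_nonneg by (intro sum_mono2) auto
    also have "\<dots> = b 0 + (\<Sum>n\<in>{1..N}. b n)"
      by (simp add: atLeast1_atMost_eq_remove0 lessThan_Suc_atMost sum.remove[of "{..N}" 0])
    finally show ?thesis
      using b_partial[of N] by (simp add: b_def)
  qed
  then have "summable b"
    using b_nonneg by (intro summableI_nonneg_bounded[where x = "1 + B"])
  then show ?thesis
    by (intro positive_recurrent_if_summable_tail) (simp add: b_def)
qed

lemma sum_UNIV_fun_upd:
  fixes g :: "'a::finite \<Rightarrow> 'b \<Rightarrow> 'c::comm_monoid_add"
  shows "(\<Sum>t\<in>UNIV. g t ((d(s := v)) t)) + g s (d s) = (\<Sum>t\<in>UNIV. g t (d t)) + g s v"
proof -
  have "(\<Sum>t\<in>UNIV. g t ((d(s := v)) t)) = g s v + (\<Sum>t\<in>UNIV - {s}. g t (d t))"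
    by (simp add: sum.remove[of UNIV s])
  moreover have "(\<Sum>t\<in>UNIV. g t (d t)) = g s (d s) + (\<Sum>t\<in>UNIV - {s}. g t (d t))"
    by (simp add: sum.remove[of UNIV s])
  ultimately show ?thesis by (simp add: ac_simps)
qed

definition up :: "('a \<Rightarrow> int) \<Rightarrow> 'a \<Rightarrow> 'a \<Rightarrow> int" where
  "up d s = d(s := d s + 1)"

definition dn :: "('a \<Rightarrow> int) \<Rightarrow> 'a \<Rightarrow> 'a \<Rightarrow> int" where
  "dn d s = d(s := d s - 1)"

lemma dn_up [simp]: "dn (up d s) s = d" and up_dn [simp]: "up (dn d s) s = d"
  by (simp_all add: up_def dn_def)

definition l1_dist :: "('a::finite \<Rightarrow> int) \<Rightarrow> ('a \<Rightarrow> int) \<Rightarrow> nat" where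
  "l1_dist x d = (\<Sum>t\<in>UNIV. nat \<bar>d t - x t\<bar>)"

lemma l1_dist_eq_0_iff: "l1_dist x d = 0 \<longleftrightarrow> d = x"
  by (auto simp: l1_dist_def fun_eq_iff)

lemma l1_dist_dn: "x t < d t \<Longrightarrow> Suc (l1_dist x (dn d t)) = l1_dist x d"
  using sum_UNIV_fun_upd[of "\<lambda>t y. nat \<bar>y - x t\<bar>" d t "d t - 1"]
  by (simp add: l1_dist_def dn_def)

lemma l1_dist_up: "d t < x t \<Longrightarrow> Suc (l1_dist x (up d t)) = l1_dist x d"
  using sum_UNIV_fun_upd[of "\<lambda>t y. nat \<bar>y - x t\<bar>" d t "d t + 1"]
  by (simp add: l1_dist_def up_def)

lemma l1_dist_le:
  "real (l1_dist x d) \<le> (\<Sum>t\<in>UNIV. \<bar>real_of_int (d t)\<bar>) + (\<Sum>t\<in>UNIV. \<bar>real_of_int (x t)\<bar>)"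
proof -
  have "real (l1_dist x d) = (\<Sum>t\<in>UNIV. \<bar>real_of_int (d t) - real_of_int (x t)\<bar>)"
    by (simp add: l1_dist_def)
  also have "\<dots> \<le> (\<Sum>t\<in>UNIV. \<bar>real_of_int (d t)\<bar> + \<bar>real_of_int (x t)\<bar>)"
    by (intro sum_mono abs_triangle_ineq4)
  finally show ?thesis by (simp add: sum.distrib)
qed

lemma UNIV_stratum: "(UNIV :: stratum set) = {(True, True), (True, False), (False, True), (False, False)}"
  by (auto simp: UNIV_bool)

lemma sum_UNIV_stratum:
  "(\<Sum>t\<in>UNIV. f t) = f (True, True) + f (True, False) + f (False, True) + f (False, False)"
  by (simp add: UNIV_stratum add.assoc)

lemma sum_fst_stratum: "(\<Sum>t\<in>{t :: stratum. fst t = k}. f t) = f (k, True) + f (k, False)"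
proof -
  have "{t :: stratum. fst t = k} = {(k, True), (k, False)}" by auto
  then show ?thesis by simp
qed

lemma sum_snd_stratum: "(\<Sum>t\<in>{t :: stratum. snd t = k}. f t) = f (True, k) + f (False, k)"
proof -
  have "{t :: stratum. snd t = k} = {(True, k), (False, k)}" by auto
  then show ?thesis by simp
qed

locale car_design =
  fixes wo wm1 wm2 ws p q :: real and Z :: "stratum pmf"
  assumes q_pos: "0 < q" and q_less_p: "q < p" and p_plus_q: "p + q = 1"
    and Z_pos: "\<And>s. 0 < pmf Z s"
begin

abbreviation K :: "cstate \<Rightarrow> cstate pmf" where
  "K \<equiv> car_kernel wo wm1 wm2 ws p q Z"

abbreviation \<alpha> :: "cstate \<Rightarrow> stratum \<Rightarrow> real" where
  "\<alpha> \<equiv> assign_prob wo wm1 wm2 ws p q"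

lemma assign_prob_bounds: "q \<le> \<alpha> d s" "\<alpha> d s \<le> p"
  using q_less_p p_plus_q by (auto simp: assign_prob_def)

lemma assign_prob_01: "0 \<le> \<alpha> d s" "\<alpha> d s \<le> 1"
  using assign_prob_bounds[of d s] q_pos q_less_p p_plus_q by auto

lemma set_pmf_Z: "set_pmf Z = UNIV"
  using Z_pos by (auto simp: set_pmf_iff) (metis less_irrefl)

lemma set_pmf_K: "set_pmf (K d) = range (up d) \<union> range (dn d)"
proof -
  have "0 < \<alpha> d s" "\<alpha> d s < 1" for s
    using assign_prob_bounds[of d s] q_pos q_less_p p_plus_q by auto
  then have "set_pmf (K d) = (\<Union>s. (\<lambda>b. d(s := d s + (if b then 1 else -1))) ` UNIV)"
    by (simp add: car_kernel_def set_pmf_Z)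
  also have "\<dots> = range (up d) \<union> range (dn d)"
    by (auto simp: up_def dn_def UNIV_bool)
  finally show ?thesis .
qed

lemma accessible_K: "accessible K x y"
proof (rule accessible_by_descent[where \<rho> = "l1_dist x"])
  show "y = x" if "l1_dist x y = 0" for y
    using that by (simp add: l1_dist_eq_0_iff)
  fix y assume "0 < l1_dist x y"
  then have "y \<noteq> x"
    by (auto simp: l1_dist_eq_0_iff[symmetric])
  then obtain t where t: "y t \<noteq> x t"
    by (meson ext)
  show "\<exists>y'. l1_dist x y' < l1_dist x y \<and> y \<in> set_pmf (K y')"
  proof (cases "x t < y t")
    case True
    then have "l1_dist x (dn y t) < l1_dist x y"
      using l1_dist_dn[of x t y] by simp
    moreover have "y \<in> set_pmf (K (dn y t))"
      unfolding set_pmf_K by (metis up_dn rangeI UnI1)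
    ultimately show ?thesis by blast
  next
    case False
    with t have "l1_dist x (up y t) < l1_dist x y"
      using l1_dist_up[of y t x] by simp
    moreover have "y \<in> set_pmf (K (up y t))"
      unfolding set_pmf_K by (metis dn_up rangeI UnI2)
    ultimately show ?thesis by blast
  qed
qed

lemma period_K: "period K x = 2"
proof (rule period_eq_2I)
  define s :: stratum where "s = (True, True)"
  have "up x s \<in> set_pmf (K x)" "x \<in> set_pmf (K (up x s))"
    unfolding set_pmf_K by (metis dn_up rangeI UnI1 UnI2)+
  then have "x \<in> set_pmf (mc_steps K 2 x)"
    by (auto simp: numeral_2_eq_2)
  then show "0 < n_step K 2 x x"
    by (simp add: n_step_pos_iff)
next
  fix n assume "0 < n_step K n x x"
  moreover have "odd ((\<Sum>t\<in>UNIV. z t) - (\<Sum>t\<in>UNIV. y t))" if "z \<in> set_pmf (K y)" for y z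
  proof -
    from that obtain s where "z = up y s \<or> z = dn y s"
      by (auto simp: set_pmf_K)
    moreover have "(\<Sum>t\<in>UNIV. up y s t) + y s = (\<Sum>t\<in>UNIV. y t) + (y s + 1)"
      using sum_UNIV_fun_upd[of "\<lambda>_ v. v" y s "y s + 1"] by (simp add: up_def)
    moreover have "(\<Sum>t\<in>UNIV. dn y s t) + y s = (\<Sum>t\<in>UNIV. y t) + (y s - 1)"
      using sum_UNIV_fun_upd[of "\<lambda>_ v. v" y s "y s - 1"] by (simp add: dn_def)
    ultimately show ?thesis by auto
  qed
  ultimately show "even n"
    using mc_steps_parity[of K "\<lambda>d. \<Sum>t\<in>UNIV. d t" x n x] by (simp add: n_step_pos_iff)
qed

definition step_expect :: "cstate \<Rightarrow> (cstate \<Rightarrow> real) \<Rightarrow> real" where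
  "step_expect d F = (\<Sum>s\<in>UNIV. pmf Z s * (\<alpha> d s * F (up d s) + (1 - \<alpha> d s) * F (dn d s)))"

lemma nn_integral_K:
  assumes "\<And>y. 0 \<le> F y"
  shows "(\<integral>\<^sup>+ y. ennreal (F y) \<partial>K d) = ennreal (step_expect d F)"
proof -
  have coin: "(\<integral>\<^sup>+ b. ennreal (F (d(s := d s + (if b then 1 else -1)))) \<partial>bernoulli_pmf (\<alpha> d s))
      = ennreal (\<alpha> d s * F (up d s) + (1 - \<alpha> d s) * F (dn d s))" for s
    using assms[of "up d s"] assms[of "dn d s"] assign_prob_01[of d s]
    by (simp add: up_def dn_def ennreal_mult[symmetric] ennreal_plus[symmetric] mult.commute
             del: ennreal_plus)
  have "(\<integral>\<^sup>+ y. ennreal (F y) \<partial>K d) =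
      (\<integral>\<^sup>+ s. ennreal (\<alpha> d s * F (up d s) + (1 - \<alpha> d s) * F (dn d s)) \<partial>Z)"
    unfolding car_kernel_def by (simp add: coin)
  also have "\<dots> = (\<Sum>s\<in>UNIV. ennreal (\<alpha> d s * F (up d s) + (1 - \<alpha> d s) * F (dn d s)) * pmf Z s)"
    by (rule nn_integral_measure_pmf_support) auto
  also have "\<dots> = ennreal (step_expect d F)"
    unfolding step_expect_def using assms assign_prob_01
    by (subst sum_ennreal[symmetric])
       (auto intro!: sum.cong mult_nonneg_nonneg add_nonneg_nonneg simp: ennreal_mult' mult.commute)
  finally show ?thesis .
qed

lemma step_expect_mono: "(\<And>y. F y \<le> G y) \<Longrightarrow> step_expect d F \<le> step_expect d G"
  unfolding step_expect_def using assign_prob_01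
  by (intro sum_mono mult_left_mono add_mono) auto

lemma step_expect_nonneg: "(\<And>y. 0 \<le> F y) \<Longrightarrow> 0 \<le> step_expect d F"
  using step_expect_mono[of "\<lambda>_. 0" F d] by (simp add: step_expect_def)

lemma step_expect_affine:
  "step_expect d (\<lambda>y. F y + b + c * G y) = step_expect d F + b + c * step_expect d G"
proof -
  have "step_expect d (\<lambda>y. F y + b + c * G y)
      = (\<Sum>s\<in>UNIV. pmf Z s * (\<alpha> d s * F (up d s) + (1 - \<alpha> d s) * F (dn d s)) + pmf Z s * b
           + c * (pmf Z s * (\<alpha> d s * G (up d s) + (1 - \<alpha> d s) * G (dn d s))))"
    unfolding step_expect_def by (intro sum.cong) (auto simp: algebra_simps)
  also have "\<dots> = step_expect d F + (\<Sum>s\<in>UNIV. pmf Z s) * b + c * step_expect d G"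
    unfolding step_expect_def by (simp add: sum.distrib sum_distrib_left sum_distrib_right)
  also have "(\<Sum>s\<in>UNIV. pmf Z s) = 1"
    by (rule sum_pmf_eq_1) auto
  finally show ?thesis by simp
qed

definition z_min :: real where
  "z_min = Min (range (pmf Z))"

lemma z_min_pos: "0 < z_min" and z_min_le: "z_min \<le> pmf Z s"
  using Z_pos by (auto simp: z_min_def)

definition \<gamma> :: real where
  "\<gamma> = q * z_min / 2"

lemma \<gamma>_pos: "0 < \<gamma>"
  using q_pos z_min_pos by (simp add: \<gamma>_def)

lemma \<gamma>_le_1: "\<gamma> \<le> 1"
proof -
  have "z_min \<le> 1"
    using z_min_le[of undefined] pmf_le_1[of Z undefined] by linarith
  moreover have "q \<le> 1"
    using q_less_p p_plus_q by simp
  ultimately show ?thesis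
    using q_pos z_min_pos mult_mono[of q 1 z_min 1] by (simp add: \<gamma>_def)
qed

definition proximity :: "cstate \<Rightarrow> cstate \<Rightarrow> real" where
  "proximity x d = \<gamma> ^ l1_dist x d"

lemma proximity_nonneg: "0 \<le> proximity x d" and proximity_le_1: "proximity x d \<le> 1"
  using \<gamma>_pos \<gamma>_le_1 by (simp_all add: proximity_def power_le_one)

text \<open>With probability at least \<open>q z_min = 2\<gamma>\<close> the chain moves one step closer to \<open>x\<close>,
  which multiplies the proximity by \<open>1/\<gamma>\<close>.\<close>
lemma step_expect_proximity:
  assumes "d \<noteq> x"
  shows "2 * proximity x d \<le> step_expect d (proximity x)"
proof -
  obtain t where t: "d t \<noteq> x t"
    using assms by (meson ext)
  define y where "y = (if x t < d t then dn d t else up d t)"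
  define w where "w = (if x t < d t then 1 - \<alpha> d t else \<alpha> d t)"
  have "Suc (l1_dist x y) = l1_dist x d"
    using t l1_dist_dn[of x t d] l1_dist_up[of d t x] by (auto simp: y_def)
  then have closer: "proximity x d = \<gamma> * proximity x y"
    by (metis proximity_def power_Suc)
  have "q \<le> w"
    using assign_prob_bounds[of d t] p_plus_q by (auto simp: w_def)
  then have "q * proximity x y \<le> w * proximity x y"
    by (intro mult_right_mono proximity_nonneg)
  also have "\<dots> \<le> \<alpha> d t * proximity x (up d t) + (1 - \<alpha> d t) * proximity x (dn d t)"
    using assign_prob_01[of d t] proximity_nonneg[of x] by (auto simp: w_def y_def)
  finally have "z_min * (q * proximity x y)
      \<le> pmf Z t * (\<alpha> d t * proximity x (up d t) + (1 - \<alpha> d t) * proximity x (dn d t))"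
    using z_min_le[of t] q_pos proximity_nonneg[of x y] by (intro mult_mono) auto
  also have "\<dots> \<le> step_expect d (proximity x)"
    unfolding step_expect_def
    using assign_prob_01 proximity_nonneg
    by (intro member_le_sum[where f = "\<lambda>s. pmf Z s * (\<alpha> d s * proximity x (up d s) + (1 - \<alpha> d s) * proximity x (dn d s))"])
       (auto intro!: mult_nonneg_nonneg add_nonneg_nonneg)
  finally show ?thesis
    using closer z_min_pos by (simp add: \<gamma>_def field_simps)
qed

definition imb_grad :: "cstate \<Rightarrow> stratum \<Rightarrow> real" where
  "imb_grad d s = wo * of_int (\<Sum>t\<in>UNIV. d t) + wm1 * of_int (\<Sum>t\<in>{t. fst t = fst s}. d t)
                + wm2 * of_int (\<Sum>t\<in>{t. snd t = snd s}. d t) + ws * of_int (d s)"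

lemma imb_diff: "imb wo wm1 wm2 ws d s 1 - imb wo wm1 wm2 ws d s (-1) = 4 * imb_grad d s"
  by (simp add: imb_def imb_grad_def power2_eq_square algebra_simps)

lemma assign_prob_grad: "(2 * \<alpha> d s - 1) * imb_grad d s = - (p - q) * \<bar>imb_grad d s\<bar>"
proof -
  have "p * imb_grad d s + q * imb_grad d s = imb_grad d s"
    using p_plus_q by (metis distrib_right mult_1)
  then show ?thesis
    using imb_diff[of d s] by (auto simp: assign_prob_def abs_if algebra_simps)
qed

end

section \<open>The imbalance energy\<close>

locale car_weighted = car_design +
  assumes wo_nonneg: "0 \<le> wo" and wm1_nonneg: "0 \<le> wm1" and wm2_nonneg: "0 \<le> wm2"
    and ws_pos: "0 < ws" and weights_sum: "wo + wm1 + wm2 + ws = 1"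
begin

definition imb_energy :: "cstate \<Rightarrow> real" where
  "imb_energy d = wo * (of_int (\<Sum>t\<in>UNIV. d t))\<^sup>2
     + wm1 * ((of_int (\<Sum>t\<in>{t. fst t = True}. d t))\<^sup>2 + (of_int (\<Sum>t\<in>{t. fst t = False}. d t))\<^sup>2)
     + wm2 * ((of_int (\<Sum>t\<in>{t. snd t = True}. d t))\<^sup>2 + (of_int (\<Sum>t\<in>{t. snd t = False}. d t))\<^sup>2)
     + ws * (\<Sum>t\<in>UNIV. (of_int (d t))\<^sup>2)"

lemma imb_energy_nonneg: "0 \<le> imb_energy d"
  unfolding imb_energy_def using wo_nonneg wm1_nonneg wm2_nonneg ws_pos
  by (intro add_nonneg_nonneg mult_nonneg_nonneg sum_nonneg) auto

lemma imb_energy_ge: "ws * (\<Sum>t\<in>UNIV. (of_int (d t))\<^sup>2) \<le> imb_energy d"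
  unfolding imb_energy_def using wo_nonneg wm1_nonneg wm2_nonneg
  by (intro add_increasing mult_nonneg_nonneg add_nonneg_nonneg) auto

lemma imb_energy_eq_sum_grad: "imb_energy d = (\<Sum>s\<in>UNIV. of_int (d s) * imb_grad d s)"
  unfolding imb_energy_def imb_grad_def sum_fst_stratum sum_snd_stratum sum_UNIV_stratum
  by (simp add: power2_eq_square algebra_simps)

text \<open>The total weight 1 is the constant term of the increment.\<close>
lemma imb_energy_shift:
  assumes "e = 1 \<or> e = -1"
  shows "imb_energy (d(s := d s + e)) = imb_energy d + 2 * of_int e * imb_grad d s + 1"
proof -
  obtain k1 k2 where s: "s = (k1, k2)" by (cases s)
  have ws: "ws = 1 - wo - wm1 - wm2" using weights_sum by simp
  show ?thesis
    using assms unfolding imb_energy_def imb_grad_def s sum_fst_stratum sum_snd_stratum sum_UNIV_stratum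
    by (cases k1; cases k2) (auto simp: ws power2_eq_square algebra_simps)
qed

lemma imb_energy_up: "imb_energy (up d s) = imb_energy d + 2 * imb_grad d s + 1"
  using imb_energy_shift[of 1 d s] by (simp add: up_def)

lemma imb_energy_dn: "imb_energy (dn d s) = imb_energy d - 2 * imb_grad d s + 1"
  using imb_energy_shift[of "-1" d s] by (simp add: dn_def)

lemma step_expect_imb_energy:
  "step_expect d imb_energy = imb_energy d + 1 - 2 * (p - q) * (\<Sum>s\<in>UNIV. pmf Z s * \<bar>imb_grad d s\<bar>)"
proof -
  have "pmf Z s * (\<alpha> d s * imb_energy (up d s) + (1 - \<alpha> d s) * imb_energy (dn d s))
      = pmf Z s * (imb_energy d + 1) + 2 * pmf Z s * ((2 * \<alpha> d s - 1) * imb_grad d s)" for s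
    by (simp add: imb_energy_up imb_energy_dn algebra_simps)
  then have "step_expect d imb_energy
      = (\<Sum>s\<in>UNIV. pmf Z s * (imb_energy d + 1) - 2 * (p - q) * (pmf Z s * \<bar>imb_grad d s\<bar>))"
    unfolding step_expect_def assign_prob_grad by (intro sum.cong) (auto simp: algebra_simps)
  also have "\<dots> = (\<Sum>s\<in>UNIV. pmf Z s) * (imb_energy d + 1)
      - 2 * (p - q) * (\<Sum>s\<in>UNIV. pmf Z s * \<bar>imb_grad d s\<bar>)"
    by (simp add: sum_subtractf sum_distrib_left sum_distrib_right)
  also have "(\<Sum>s\<in>UNIV. pmf Z s) = 1"
    by (rule sum_pmf_eq_1) auto
  finally show ?thesis by simp
qed

text \<open>Since \<open>ws > 0\<close> the energy is positive definite, so the gradient grows linearly in \<open>D\<close>: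
  \<open>ws |D|\<^sub>1\<^sup>2 \<le> 4 ws |D|\<^sub>2\<^sup>2 \<le> 4 V(D) = 4 \<langle>D, L\<rangle> \<le> 4 |D|\<^sub>1 |L|\<^sub>1\<close>.\<close>
lemma l1_le_imb_grad: "ws * (\<Sum>t\<in>UNIV. \<bar>real_of_int (d t)\<bar>) \<le> 4 * (\<Sum>s\<in>UNIV. \<bar>imb_grad d s\<bar>)"
proof -
  define n where "n = (\<Sum>t\<in>UNIV. \<bar>real_of_int (d t)\<bar>)"
  define L where "L = (\<Sum>s\<in>UNIV. \<bar>imb_grad d s\<bar>)"
  have "n\<^sup>2 \<le> (\<Sum>t\<in>UNIV. (real_of_int (d t))\<^sup>2) * card (UNIV :: stratum set)"
    unfolding n_def using sum_squared_le_sum_of_squares[of "\<lambda>t. \<bar>real_of_int (d t)\<bar>" UNIV]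
    by simp
  then have "ws * n\<^sup>2 \<le> 4 * (ws * (\<Sum>t\<in>UNIV. (real_of_int (d t))\<^sup>2))"
    using ws_pos mult_left_mono[of "n\<^sup>2" _ ws] by (simp add: UNIV_stratum)
  also have "\<dots> \<le> 4 * imb_energy d"
    using imb_energy_ge by simp
  also have "imb_energy d \<le> (\<Sum>s\<in>UNIV. \<bar>real_of_int (d s)\<bar> * \<bar>imb_grad d s\<bar>)"
    unfolding imb_energy_eq_sum_grad by (intro sum_mono) (metis abs_ge_self abs_mult)
  also have "\<dots> \<le> (\<Sum>s\<in>UNIV. n * \<bar>imb_grad d s\<bar>)"
    unfolding n_def by (intro sum_mono mult_right_mono member_le_sum) auto
  finally have "n * (ws * n) \<le> n * (4 * L)"
    by (simp add: L_def sum_distrib_left power2_eq_square algebra_simps)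
  moreover have "0 \<le> L" "0 \<le> n"
    by (simp_all add: L_def n_def sum_nonneg)
  ultimately show ?thesis
    unfolding n_def[symmetric] L_def[symmetric]
    by (cases "n = 0") (simp_all add: mult_le_cancel_left)
qed

definition drift_radius :: real where
  "drift_radius = 4 / ((p - q) * z_min * ws)"

lemma step_expect_imb_energy_far:
  assumes "drift_radius \<le> (\<Sum>t\<in>UNIV. \<bar>real_of_int (d t)\<bar>)"
  shows "step_expect d imb_energy + 1 \<le> imb_energy d"
proof -
  have pos: "0 < (p - q) * z_min" using q_less_p z_min_pos by simp
  have "4 \<le> (p - q) * z_min * (ws * (\<Sum>t\<in>UNIV. \<bar>real_of_int (d t)\<bar>))"
    using assms pos ws_pos by (simp add: drift_radius_def field_simps)
  also have "\<dots> \<le> (p - q) * z_min * (4 * (\<Sum>s\<in>UNIV. \<bar>imb_grad d s\<bar>))"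
    using pos l1_le_imb_grad by (intro mult_left_mono) auto
  also have "\<dots> = 4 * ((p - q) * (\<Sum>s\<in>UNIV. z_min * \<bar>imb_grad d s\<bar>))"
    by (simp add: sum_distrib_left algebra_simps)
  also have "\<dots> \<le> 4 * ((p - q) * (\<Sum>s\<in>UNIV. pmf Z s * \<bar>imb_grad d s\<bar>))"
    using q_less_p z_min_le by (intro mult_left_mono sum_mono mult_right_mono) auto
  finally have "1 \<le> (p - q) * (\<Sum>s\<in>UNIV. pmf Z s * \<bar>imb_grad d s\<bar>)"
    by simp
  then show ?thesis
    using step_expect_imb_energy[of d] by (simp only: mult.assoc)
qed

definition near_radius :: "cstate \<Rightarrow> nat" where
  "near_radius x = nat \<lceil>drift_radius + (\<Sum>t\<in>UNIV. \<bar>real_of_int (x t)\<bar>)\<rceil>"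

lemma proximity_ge_near:
  assumes "(\<Sum>t\<in>UNIV. \<bar>real_of_int (d t)\<bar>) < drift_radius"
  shows "\<gamma> ^ near_radius x \<le> proximity x d"
proof -
  have "real (l1_dist x d) \<le> drift_radius + (\<Sum>t\<in>UNIV. \<bar>real_of_int (x t)\<bar>)"
    using l1_dist_le[of x d] assms by linarith
  then have "l1_dist x d \<le> near_radius x"
    unfolding near_radius_def by linarith
  then show ?thesis
    unfolding proximity_def using \<gamma>_pos \<gamma>_le_1 by (intro power_decreasing) auto
qed

text \<open>Off the ball where the energy has drift \<open>\<le> -1\<close>, the proximity term, weighted so that it
  contributes at least 2 there, makes up for the energy's drift \<open>\<le> +1\<close>.\<close>
definition lyapunov :: "cstate \<Rightarrow> cstate \<Rightarrow> real" where
  "lyapunov x d =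
     (if d = x then 0 else imb_energy d + 2 / \<gamma> ^ near_radius x * (1 - proximity x d))"

lemma lyapunov_le: "lyapunov x y \<le> imb_energy y + 2 / \<gamma> ^ near_radius x * (1 - proximity x y)"
  and lyapunov_nonneg: "0 \<le> lyapunov x y"
proof -
  have "0 \<le> imb_energy y + 2 / \<gamma> ^ near_radius x * (1 - proximity x y)" for y
    using imb_energy_nonneg[of y] proximity_le_1[of x y] \<gamma>_pos by simp
  then show "lyapunov x y \<le> imb_energy y + 2 / \<gamma> ^ near_radius x * (1 - proximity x y)"
    and "0 \<le> lyapunov x y"
    by (simp_all add: lyapunov_def)
qed

lemma step_expect_lyapunov:
  assumes "d \<noteq> x"
  shows "step_expect d (lyapunov x) + 1 \<le> lyapunov x d"
proof -
  define M where "M = 2 / \<gamma> ^ near_radius x"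
  have M_pos: "0 < M"
    using \<gamma>_pos by (simp add: M_def)
  have "step_expect d (lyapunov x) \<le> step_expect d (\<lambda>y. imb_energy y + M + (- M) * proximity x y)"
  proof (intro step_expect_mono)
    fix y
    have "M * (1 - proximity x y) = M + (- M) * proximity x y"
      by (simp add: algebra_simps)
    then show "lyapunov x y \<le> imb_energy y + M + (- M) * proximity x y"
      using lyapunov_le[of x y, folded M_def] by linarith
  qed
  also have "\<dots> = step_expect d imb_energy + M - M * step_expect d (proximity x)"
    using step_expect_affine[of d imb_energy M "- M" "proximity x"] by simp
  also have "\<dots> \<le> step_expect d imb_energy + M - M * (2 * proximity x d)"
    using step_expect_proximity[OF assms] M_pos by simp
  finally have expect_le: "step_expect d (lyapunov x)
      \<le> step_expect d imb_energy + M - M * (2 * proximity x d)" .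
  have "lyapunov x d = imb_energy d + M - M * proximity x d"
    using assms unfolding lyapunov_def M_def[symmetric] by (simp add: right_diff_distrib)
  moreover have "step_expect d imb_energy + 1 \<le> imb_energy d + M * proximity x d"
  proof (cases "drift_radius \<le> (\<Sum>t\<in>UNIV. \<bar>real_of_int (d t)\<bar>)")
    case True
    moreover have "0 \<le> M * proximity x d"
      using M_pos proximity_nonneg[of x d] by simp
    ultimately show ?thesis
      using step_expect_imb_energy_far[of d] by linarith
  next
    case False
    then have "2 \<le> M * proximity x d"
      using proximity_ge_near[of d x] \<gamma>_pos by (simp add: M_def field_simps)
    moreover have "step_expect d imb_energy \<le> imb_energy d + 1"
      unfolding step_expect_imb_energy using q_less_p by (simp add: sum_nonneg)
    ultimately show ?thesis by simp
  qed
  ultimately show ?thesis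
    using expect_le by simp
qed

lemma positive_recurrent_K: "positive_recurrent K x"
proof (rule positive_recurrent_if_drift[where W = "lyapunov x"])
  show "lyapunov x x = 0"
    by (simp add: lyapunov_def)
  show "(\<integral>\<^sup>+ y. ennreal (lyapunov x y) \<partial>K x) < \<infinity>"
    by (simp add: nn_integral_K lyapunov_nonneg)
  fix d assume "d \<noteq> x"
  then have "ennreal (step_expect d (lyapunov x) + 1) \<le> ennreal (lyapunov x d)"
    by (intro ennreal_leI step_expect_lyapunov)
  then show "(\<integral>\<^sup>+ y. ennreal (lyapunov x y) \<partial>K d) + 1 \<le> ennreal (lyapunov x d)"
    using step_expect_nonneg[of "lyapunov x" d] by (simp add: nn_integral_K lyapunov_nonneg)
qed

end

theorem theorem1:
  fixes wo wm1 wm2 ws p q :: real and Z :: "stratum pmf"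
  assumes "wo \<ge> 0" "wm1 \<ge> 0" "wm2 \<ge> 0" "ws \<ge> 0"
    and "wo + wm1 + wm2 + ws = 1"
    and "0 < q" "q < p" "p < 1" "p + q = 1"
    and "\<forall>s. pmf Z s > 0"
    and A: "ws > 0"
    and B: "\<forall>x1 x2 x3 :: real.
        (wo + wm1 + wm2 + ws) * x1 + (wo + wm1) * x2 + (wo + wm2) * x3 = wo
      \<and> (wo + wm1) * x1 + (wo + wm1 + wm2 + ws) * x2 + wo * x3 = wo + wm2
      \<and> (wo + wm2) * x1 + wo * x2 + (wo + wm1 + wm2 + ws) * x3 = wo + wm1
      \<longrightarrow> \<bar>x1\<bar> + \<bar>x2\<bar> + \<bar>x3\<bar> < 1"
  shows "(\<forall>y\<in>chain_states (car_kernel wo wm1 wm2 ws p q Z).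
            \<forall>z\<in>chain_states (car_kernel wo wm1 wm2 ws p q Z).
              accessible (car_kernel wo wm1 wm2 ws p q Z) y z)
       \<and> (\<forall>y\<in>chain_states (car_kernel wo wm1 wm2 ws p q Z).
            positive_recurrent (car_kernel wo wm1 wm2 ws p q Z) y
          \<and> period (car_kernel wo wm1 wm2 ws p q Z) y = 2)"
proof -
  interpret car_weighted wo wm1 wm2 ws p q Z
    by unfold_locales (use assms in auto)
  show ?thesis
    using accessible_K positive_recurrent_K period_K by blast
qed

end
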